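(* Let $\mathbb{M}',\mathbb{M}''$ be partial groups and let $(t,\eta)$ be a twisting pair, with $t\colon\mathbb{M}''_1\to\mathrm{Aut}(\mathbb{M}')$ and $\eta\colon\mathbb{M}''_2\to N(\mathbb{M}')$. Then $(t,\eta)$ determines a twisting function $\{\phi_n\colon\mathbb{M}''_n\to\underline{\mathrm{aut}}_{n-1}(\mathbb{M}')=N_{n-1}\mathcal{A}ut(\mathbb{M}')\}_{n\ge1}$ with $\phi_1[g]=t(g)$ and $\phi_2[g|h]=\big(t(g)\xleftarrow{\eta(g,h)}t(gh)\circ t(h)^{-1}\big)$. Moreover, every twisting function $\{\phi_n\colon\mathbb{M}''_n\to\underline{\mathrm{aut}}_{n-1}(\mathbb{M}')\}_{n\ge1}$ arises in this way from some twisting pair.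
   Context: Partial groups are simplicial sets whose $n$-simplices are words $[x_1|\dots|x_n]$ (faces multiply adjacent letters or delete first/last letter; degeneracies insert $1$). $N(\mathbb{M}')$ is the normalizer: the set of $\eta\in\mathbb{M}'_1$ such that for all $x$, $[\eta|x|\eta^{-1}]\in\mathbb{M}'$ and $x\mapsto\eta x\eta^{-1}$ extends to an automorphism, and for every simplex $[x_1|\dots|x_n]$ the words $[\eta x_1\eta^{-1}|\dots|\eta x_i\eta^{-1}|\eta|x_{i+1}|\dots|x_n]$ are simplices with equal products. The simplicial group $\underline{\mathrm{aut}}(\mathbb{M}')$ is identified with the nerve of the category $\mathcal{A}ut(\mathbb{M}')$ whose objects are automorphisms of $\mathbb{M}'$ and whose morphisms $(\Phi\xleftarrow{\eta}\Psi)$ are elements $\eta\in N(\mathbb{M}')$ arising as $F(v,\iota_1)$ for a simplicial homotopy $F\colon\mathbb{M}'\times\Delta[1]\to\mathbb{M}'$ with $F|_{\bullet_0}=\Phi$, $F|_{\bullet_1}=\Psi$; composition is multiplication of the $\eta$'s and the group structure is $(\Phi_0\xleftarrow{\omega}\Phi_1)\otimes(\Psi_0\xleftarrow{\eta}\Psi_1)=(\Phi_0\Psi_0\xleftarrow{\Phi_0(\eta)\omega}\Phi_1\Psi_1)$. A twisting pair is a pair of functions $t\colon\mathbb{M}''_1\to\mathrm{Aut}(\mathbb{M}')$ and $\eta\colon\mathbb{M}''_2\to N(\mathbb{M}')$ with (a) $t(1)=\mathrm{Id}$ and $\eta(1,g)=1=\eta(g,1)$ for all $[g]\in\mathbb{M}''_1$;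 (b) $t(g)(\eta(h,k))\cdot\eta(g,hk)=\eta(g,h)\cdot\eta(gh,k)$ for all $[g|h|k]\in\mathbb{M}''_3$. A twisting function is a family $\phi_n\colon\mathbb{M}''_n\to\underline{\mathrm{aut}}_{n-1}(\mathbb{M}')$, $n\ge1$, such that for all $b\in\mathbb{M}''_n$: $\phi_{n-1}(d_ib)=d_{i-1}(\phi_n(b))$ for $2\le i\le n$; $\phi_{n-1}(d_1b)=d_0(\phi_n(b))\cdot\phi_{n-1}(d_0b)$; $\phi_{n+1}(s_ib)=s_{i-1}(\phi_n(b))$ for $i\ge1$; $\phi_{n+1}(s_0b)=1$. *)

theory Defs
  imports Main
begin

section \<open>Partial groups (Chermak), carrier = the whole type\<close>

record 'a partial_group =
  pdom :: "'a list set"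
  pprod :: "'a list \<Rightarrow> 'a"
  pinv :: "'a \<Rightarrow> 'a"

definition pone :: "'a partial_group \<Rightarrow> 'a" where
  "pone M = pprod M []"

definition partial_group :: "'a partial_group \<Rightarrow> bool" where
  "partial_group M \<longleftrightarrow>
     (\<forall>x. [x] \<in> pdom M) \<and>
     (\<forall>u v. u @ v \<in> pdom M \<longrightarrow> u \<in> pdom M \<and> v \<in> pdom M) \<and>
     (\<forall>x. pprod M [x] = x) \<and>
     (\<forall>u v w. u @ v @ w \<in> pdom M \<longrightarrow>
        u @ [pprod M v] @ w \<in> pdom M \<and> pprod M (u @ v @ w) = pprod M (u @ [pprod M v] @ w)) \<and>
     (\<forall>x. pinv M (pinv M x) = x) \<and>
     (\<forall>w\<in>pdom M. rev (map (pinv M) w) @ w \<in> pdom M \<and>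
        pprod M (rev (map (pinv M) w) @ w) = pone M)"

text \<open>Simplicial structure: n-simplices are the words of length n in the domain.
  Face d_i (0 \<le> i \<le> n, n \<ge> 1) and degeneracy s_i (0 \<le> i \<le> n).\<close>

definition pg_face :: "'a partial_group \<Rightarrow> nat \<Rightarrow> 'a list \<Rightarrow> 'a list" where
  "pg_face M i w =
     (if i = 0 then tl w
      else if i = length w then butlast w
      else take (i - 1) w @ [pprod M [w ! (i - 1), w ! i]] @ drop (Suc i) w)"

definition pg_degen :: "'a partial_group \<Rightarrow> nat \<Rightarrow> 'a list \<Rightarrow> 'a list" where
  "pg_degen M i w = take i w @ [pone M] @ drop i w"

definition pg_aut :: "'a partial_group \<Rightarrow> ('a \<Rightarrow> 'a) set" where
  "pg_aut M = {f. bij f \<and> (\<forall>w. w \<in> pdom M \<longleftrightarrow> map f w \<in> pdom M) \<and>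
                 (\<forall>w\<in>pdom M. f (pprod M w) = pprod M (map f w))}"

definition pconj :: "'a partial_group \<Rightarrow> 'a \<Rightarrow> 'a \<Rightarrow> 'a" where
  "pconj M e x = pprod M [e, x, pinv M e]"

definition nword :: "'a partial_group \<Rightarrow> 'a \<Rightarrow> nat \<Rightarrow> 'a list \<Rightarrow> 'a list" where
  "nword M e i w = map (pconj M e) (take i w) @ [e] @ drop i w"

definition normalizer :: "'a partial_group \<Rightarrow> 'a set" where
  "normalizer M = {e. (\<forall>x. [e, x, pinv M e] \<in> pdom M) \<and> pconj M e \<in> pg_aut M \<and>
      (\<forall>w\<in>pdom M. \<forall>i\<le>length w. nword M e i w \<in> pdom M \<and>
          pprod M (nword M e i w) = pprod M (nword M e 0 w))}"

text \<open>An n-simplex of \<Delta>[1] is a monotone map [n] \<rightarrow> [1], encoded by the number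
  k \<le> n+1 of entries equal to 0.  An n-simplex of M \<times> \<Delta>[1] is a pair (w,k).\<close>

definition d1_face :: "nat \<Rightarrow> nat \<Rightarrow> nat" where
  "d1_face i k = (if i < k then k - 1 else k)"

definition d1_degen :: "nat \<Rightarrow> nat \<Rightarrow> nat" where
  "d1_degen i k = (if i < k then Suc k else k)"

definition pg_homotopy :: "'a partial_group \<Rightarrow> ('a list \<Rightarrow> nat \<Rightarrow> 'a list) \<Rightarrow> bool" where
  "pg_homotopy M F \<longleftrightarrow>
     (\<forall>w\<in>pdom M. \<forall>k\<le>Suc (length w). F w k \<in> pdom M \<and> length (F w k) = length w) \<and>
     (\<forall>w\<in>pdom M. \<forall>k\<le>Suc (length w). \<forall>i\<le>length w. 0 < length w \<longrightarrow>
        F (pg_face M i w) (d1_face i k) = pg_face M i (F w k)) \<and>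
     (\<forall>w\<in>pdom M. \<forall>k\<le>Suc (length w). \<forall>i\<le>length w.
        F (pg_degen M i w) (d1_degen i k) = pg_degen M i (F w k))"

text \<open>Morphism (Phi <-eta- Psi) of the category Aut(M): eta = F(s_0 v, iota_1) for a
  homotopy F with F restricted to vertex 0 equal to Phi, to vertex 1 equal to Psi.
  Vertex 0 in degree n is k = n+1, vertex 1 is k = 0, iota_1 is k = 1 in degree 1.\<close>

definition aut_mor :: "'a partial_group \<Rightarrow> ('a \<Rightarrow> 'a) \<Rightarrow> 'a \<Rightarrow> ('a \<Rightarrow> 'a) \<Rightarrow> bool" where
  "aut_mor M Phi e Psi \<longleftrightarrow> Phi \<in> pg_aut M \<and> Psi \<in> pg_aut M \<and> e \<in> normalizer M \<and>
     (\<exists>F. pg_homotopy M F \<and>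
          (\<forall>w\<in>pdom M. F w (Suc (length w)) = map Phi w) \<and>
          (\<forall>w\<in>pdom M. F w 0 = map Psi w) \<and>
          F [pone M] 1 = [e])"

text \<open>An n-simplex Phi_0 <-eta_1- Phi_1 <- ... <-eta_n- Phi_n is stored as the pair
  ([Phi_0,...,Phi_n], [eta_1,...,eta_n]).\<close>

type_synonym 'a aut_simplex = "('a \<Rightarrow> 'a) list \<times> 'a list"

definition nerve_simplex :: "'a partial_group \<Rightarrow> nat \<Rightarrow> 'a aut_simplex \<Rightarrow> bool" where
  "nerve_simplex M n s \<longleftrightarrow> length (fst s) = Suc n \<and> length (snd s) = n \<and>
     (\<forall>f\<in>set (fst s). f \<in> pg_aut M) \<and>
     (\<forall>i<n. aut_mor M (fst s ! i) (snd s ! i) (fst s ! Suc i))"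

definition nerve_face :: "'a partial_group \<Rightarrow> nat \<Rightarrow> 'a aut_simplex \<Rightarrow> 'a aut_simplex" where
  "nerve_face M i s = (take i (fst s) @ drop (Suc i) (fst s), pg_face M i (snd s))"

definition nerve_degen :: "'a partial_group \<Rightarrow> nat \<Rightarrow> 'a aut_simplex \<Rightarrow> 'a aut_simplex" where
  "nerve_degen M i s = (take (Suc i) (fst s) @ drop i (fst s), pg_degen M i (snd s))"

text \<open>Group structure: (Phi0 <-omega- Phi1) (x) (Psi0 <-eta- Psi1)
  = (Phi0 Psi0 <-Phi0(eta) omega- Phi1 Psi1), applied levelwise.\<close>

definition nerve_mult :: "'a partial_group \<Rightarrow> 'a aut_simplex \<Rightarrow> 'a aut_simplex \<Rightarrow> 'a aut_simplex" where
  "nerve_mult M s s' =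
     (map (\<lambda>(f, g). f \<circ> g) (zip (fst s) (fst s')),
      map (\<lambda>j. pprod M [(fst s ! j) (snd s' ! j), snd s ! j]) [0..<length (snd s)])"

definition nerve_unit :: "'a partial_group \<Rightarrow> nat \<Rightarrow> 'a aut_simplex" where
  "nerve_unit M n = (replicate (Suc n) id, replicate n (pone M))"

definition twisting_pair ::
  "'a partial_group \<Rightarrow> 'b partial_group \<Rightarrow> ('a \<Rightarrow> 'b \<Rightarrow> 'b) \<Rightarrow> ('a \<Rightarrow> 'a \<Rightarrow> 'b) \<Rightarrow> bool" where
  "twisting_pair M2 M1 t eta \<longleftrightarrow>
     (\<forall>g. t g \<in> pg_aut M1) \<and>
     (\<forall>g h. [g, h] \<in> pdom M2 \<longrightarrow> eta g h \<in> normalizer M1) \<and>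
     (\<forall>g h. [g, h] \<in> pdom M2 \<longrightarrow>
        aut_mor M1 (t g) (eta g h) (t (pprod M2 [g, h]) \<circ> inv (t h))) \<and>
     t (pone M2) = id \<and>
     (\<forall>g. eta (pone M2) g = pone M1 \<and> eta g (pone M2) = pone M1) \<and>
     (\<forall>g h k. [g, h, k] \<in> pdom M2 \<longrightarrow>
        pprod M1 [t g (eta h k), eta g (pprod M2 [h, k])] =
        pprod M1 [eta g h, eta (pprod M2 [g, h]) k])"

definition twisting_function ::
  "'a partial_group \<Rightarrow> 'b partial_group \<Rightarrow> (nat \<Rightarrow> 'a list \<Rightarrow> 'b aut_simplex) \<Rightarrow> bool" where
  "twisting_function M2 M1 phi \<longleftrightarrow>
     (\<forall>n\<ge>1. \<forall>b\<in>pdom M2. length b = n \<longrightarrow>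
        nerve_simplex M1 (n - 1) (phi n b) \<and>
        (\<forall>i. 2 \<le> i \<and> i \<le> n \<longrightarrow>
           phi (n - 1) (pg_face M2 i b) = nerve_face M1 (i - 1) (phi n b)) \<and>
        (2 \<le> n \<longrightarrow> phi (n - 1) (pg_face M2 1 b) =
           nerve_mult M1 (nerve_face M1 0 (phi n b)) (phi (n - 1) (pg_face M2 0 b))) \<and>
        (\<forall>i. 1 \<le> i \<and> i \<le> n \<longrightarrow>
           phi (Suc n) (pg_degen M2 i b) = nerve_degen M1 (i - 1) (phi n b)) \<and>
        phi (Suc n) (pg_degen M2 0 b) = nerve_unit M1 n)"

definition low_values ::
  "'a partial_group \<Rightarrow> 'b partial_group \<Rightarrow> ('a \<Rightarrow> 'b \<Rightarrow> 'b) \<Rightarrow> ('a \<Rightarrow> 'a \<Rightarrow> 'b)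
     \<Rightarrow> (nat \<Rightarrow> 'a list \<Rightarrow> 'b aut_simplex) \<Rightarrow> bool" where
  "low_values M2 M1 t eta phi \<longleftrightarrow>
     (\<forall>g. phi 1 [g] = ([t g], [])) \<and>
     (\<forall>g h. [g, h] \<in> pdom M2 \<longrightarrow>
        phi 2 [g, h] = ([t g, t (pprod M2 [g, h]) \<circ> inv (t h)], [eta g h]))"

end

theory Submission
  imports Defs
begin

text \<open>A morphism \<open>\<Phi> \<leftarrow>\<eta> \<Psi>\<close> of \<open>Aut(M')\<close> exists exactly when \<open>\<eta>\<close> lies in the
  normalizer and \<open>\<Phi> = c\<^sub>\<eta> \<circ> \<Psi>\<close> for the conjugation \<open>c\<^sub>\<eta>\<close>: a homotopy, restricted to the
  triangles over \<open>[x|1]\<close> and \<open>[1|x]\<close>, forces \<open>\<Phi>(x)\<eta> = \<eta>\<Psi>(x)\<close>, and conversely such an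
  \<open>\<eta>\<close> yields an explicit homotopy. This reduces everything to algebra in \<open>M'\<close>.

  A twisting function gives \<open>t\<close> and \<open>\<eta>\<close> as its values in degrees 1 and 2, and the face
  relations for \<open>\<phi>\<^sub>3[g|h|k]\<close> give the cocycle identity. Conversely, with the prefix products
  \<open>q\<^sub>j = g\<^sub>2\<cdots>g\<^sub>j\<^sub>+\<^sub>1\<close>, let \<open>\<phi>[g\<^sub>1|\<dots>|g\<^sub>n]\<close> have objects \<open>t(g\<^sub>1q\<^sub>j) t(q\<^sub>j)\<^sup>-\<^sup>1\<close> and
  morphisms \<open>\<eta>(g\<^sub>1,q\<^sub>j)\<^sup>-\<^sup>1 \<eta>(g\<^sub>1,q\<^sub>j\<^sub>+\<^sub>1)\<close>. Faces and degeneracies act on prefix products through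
  cofaces and codegeneracies, the morphisms telescope, and the twisted face \<open>d\<^sub>1\<close> is the
  cocycle identity. Uniqueness holds because a simplex of dimension at least two in a nerve
  is determined by its last two faces, so by induction everything is fixed in degrees 1 and 2.\<close>

section \<open>Words and simplicial operators\<close>

definition coface :: "nat \<Rightarrow> nat \<Rightarrow> nat" where
  "coface i j = (if j < i then j else Suc j)"

definition codegeneracy :: "nat \<Rightarrow> nat \<Rightarrow> nat" where
  "codegeneracy i j = (if j \<le> i then j else j - 1)"

lemma map_upt_coface:
  "i \<le> n \<Longrightarrow> map (f \<circ> coface i) [0..<n] = take i (map f [0..<Suc n]) @ drop (Suc i) (map f [0..<Suc n])"
proof (rule nth_equalityI)
  fix j assume "i \<le> n" "j < length (map (f \<circ> coface i) [0..<n])"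
  then show "map (f \<circ> coface i) [0..<n] ! j = (take i (map f [0..<Suc n]) @ drop (Suc i) (map f [0..<Suc n])) ! j"
    by (auto simp: coface_def nth_append simp del: upt_Suc)
qed simp

lemma map_upt_codegeneracy:
  "i \<le> n \<Longrightarrow> map (f \<circ> codegeneracy i) [0..<Suc (Suc n)] =
     take (Suc i) (map f [0..<Suc n]) @ drop i (map f [0..<Suc n])"
  by (rule nth_equalityI) (auto simp: codegeneracy_def nth_append simp del: upt_Suc)

lemma take_nth_nth_drop:
  "Suc i < length w \<Longrightarrow> w = take i w @ [w ! i, w ! Suc i] @ drop (Suc (Suc i)) w"
  by (metis Cons_nth_drop_Suc Suc_lessD append_Cons append_Nil append_take_drop_id)

lemma pg_face_length: "0 < length w \<Longrightarrow> i \<le> length w \<Longrightarrow> length (pg_face M i w) = length w - 1"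
  by (auto simp: pg_face_def)

lemma pg_face_nth:
  assumes "i \<le> length w" "j < length w - 1"
  shows "pg_face M i w ! j = (if i = 0 then w ! Suc j else if j < i - 1 then w ! j
     else if j = i - 1 then pprod M [w ! j, w ! Suc j] else w ! Suc j)"
  using assms by (auto simp: pg_face_def nth_append nth_tl nth_butlast min_def)

lemma pg_face_Cons: "1 \<le> i \<Longrightarrow> i \<le> length w \<Longrightarrow> pg_face M (Suc i) (x # w) = x # pg_face M i w"
  by (cases i; cases w) (auto simp: pg_face_def)

lemma pg_degen_length [simp]: "i \<le> length w \<Longrightarrow> length (pg_degen M i w) = Suc (length w)"
  by (simp add: pg_degen_def)

lemma pg_degen_nth:
  "i \<le> length w \<Longrightarrow> j \<le> length w \<Longrightarrow>
     pg_degen M i w ! j = (if j < i then w ! j else if j = i then pone M else w ! (j - 1))"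
  by (auto simp: pg_degen_def nth_append min_def)

lemma pg_degen_Cons: "pg_degen M (Suc i) (x # w) = x # pg_degen M i w"
  by (simp add: pg_degen_def)

definition pg_ratios :: "'a partial_group \<Rightarrow> (nat \<Rightarrow> 'a) \<Rightarrow> nat \<Rightarrow> 'a list" where
  "pg_ratios M A n = map (\<lambda>j. pprod M [pinv M (A j), A (Suc j)]) [0..<n]"

lemma length_pg_ratios [simp]: "length (pg_ratios M A n) = n"
  by (simp add: pg_ratios_def)

lemma ex_snoc2: "2 \<le> length l \<Longrightarrow> \<exists>xs p q. l = xs @ [p, q]"
proof (induct l rule: rev_induct)
  case (snoc x l)
  then obtain ys y where "l = ys @ [y]" by (cases l rule: rev_cases) auto
  then show ?case by auto
qed simp

lemma list_of_length_1: "length l = 1 \<Longrightarrow> l = [hd l]"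
  by (cases l) auto

lemma list_of_length_2: "length l = 2 \<Longrightarrow> l = [l ! 0, l ! 1]"
  by (cases l; cases "tl l") (auto simp: numeral_2_eq_2)

lemma list_of_length_3: "length l = 3 \<Longrightarrow> l = [l ! 0, l ! 1, l ! 2]"
  by (cases l; cases "tl l"; cases "tl (tl l)") (auto simp: numeral_3_eq_3 numeral_2_eq_2)

lemma nerve_simplexD:
  assumes "nerve_simplex M n s"
  shows "length (fst s) = Suc n" "length (snd s) = n" "\<And>f. f \<in> set (fst s) \<Longrightarrow> f \<in> pg_aut M"
    "\<And>i. i < n \<Longrightarrow> aut_mor M (fst s ! i) (snd s ! i) (fst s ! Suc i)"
  using assms unfolding nerve_simplex_def by auto

lemma twisting_functionD:
  assumes "twisting_function M2 M1 phi" "b \<in> pdom M2" "length b = n" "1 \<le> n"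
  shows "nerve_simplex M1 (n - 1) (phi n b)"
    "\<And>i. 2 \<le> i \<Longrightarrow> i \<le> n \<Longrightarrow> phi (n - 1) (pg_face M2 i b) = nerve_face M1 (i - 1) (phi n b)"
    "2 \<le> n \<Longrightarrow> phi (n - 1) (pg_face M2 1 b) =
       nerve_mult M1 (nerve_face M1 0 (phi n b)) (phi (n - 1) (pg_face M2 0 b))"
    "\<And>i. 1 \<le> i \<Longrightarrow> i \<le> n \<Longrightarrow> phi (Suc n) (pg_degen M2 i b) = nerve_degen M1 (i - 1) (phi n b)"
    "phi (Suc n) (pg_degen M2 0 b) = nerve_unit M1 n"
  using assms unfolding twisting_function_def by blast+

section \<open>Partial groups, automorphisms and the normalizer\<close>

locale pgroup =
  fixes M :: "'a partial_group"
  assumes partial_group: "partial_group M"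
begin

definition inv_word :: "'a list \<Rightarrow> 'a list" where
  "inv_word w = rev (map (pinv M) w)"

lemma singleton_dom [simp]: "[x] \<in> pdom M"
  and append_dom: "u @ v \<in> pdom M \<Longrightarrow> u \<in> pdom M \<and> v \<in> pdom M"
  and prod_singleton [simp]: "pprod M [x] = x"
  and prod_assoc: "u @ v @ w \<in> pdom M \<Longrightarrow>
     u @ [pprod M v] @ w \<in> pdom M \<and> pprod M (u @ v @ w) = pprod M (u @ [pprod M v] @ w)"
  and inv_inv [simp]: "pinv M (pinv M x) = x"
  and inv_word_append: "w \<in> pdom M \<Longrightarrow>
     inv_word w @ w \<in> pdom M \<and> pprod M (inv_word w @ w) = pone M"
  using partial_group unfolding partial_group_def inv_word_def by blast+

lemma dom_prefix: "u @ v \<in> pdom M \<Longrightarrow> u \<in> pdom M"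
  and dom_suffix: "u @ v \<in> pdom M \<Longrightarrow> v \<in> pdom M"
  and dom_infix: "u @ v @ w \<in> pdom M \<Longrightarrow> v \<in> pdom M"
  using append_dom by blast+

lemma Nil_dom [simp]: "[] \<in> pdom M"
  using dom_prefix[of "[]" "[x]"] by simp

lemma take_dom: "w \<in> pdom M \<Longrightarrow> take j w \<in> pdom M"
  using dom_prefix[of "take j w" "drop j w"] by simp

lemma inv_word_simps [simp]:
  "inv_word [] = []" "inv_word (x # w) = inv_word w @ [pinv M x]"
  "inv_word (u @ v) = inv_word v @ inv_word u" "inv_word (inv_word w) = w"
  "length (inv_word w) = length w"
  by (auto simp: inv_word_def rev_map[symmetric] map_map o_def)

lemma inv_word_dom_iff [simp]: "inv_word w \<in> pdom M \<longleftrightarrow> w \<in> pdom M"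
  using inv_word_append dom_prefix by (metis inv_word_simps(4))

lemma one_insert: "u @ w \<in> pdom M \<Longrightarrow>
    u @ [pone M] @ w \<in> pdom M \<and> pprod M (u @ [pone M] @ w) = pprod M (u @ w)"
  using prod_assoc[of u "[]" w] by (simp add: pone_def)

lemma prod_append: "u @ v \<in> pdom M \<Longrightarrow>
    [pprod M u, pprod M v] \<in> pdom M \<and> pprod M (u @ v) = pprod M [pprod M u, pprod M v]"
  using prod_assoc[of "[]" u v] prod_assoc[of "[pprod M u]" v "[]"] by auto

lemma prod_Cons: "x # v \<in> pdom M \<Longrightarrow> pprod M (x # v) = pprod M [x, pprod M v]"
  using prod_append[of "[x]" v] by simp

lemma prod_one_left [simp]: "pprod M [pone M, x] = x"
  and prod_one_right [simp]: "pprod M [x, pone M] = x"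
  and one_left_dom [simp]: "[pone M, x] \<in> pdom M"
  and one_right_dom [simp]: "[x, pone M] \<in> pdom M"
  using one_insert[of "[]" "[x]"] one_insert[of "[x]" "[]"] by simp_all

lemma inv_left [simp]: "[pinv M x, x] \<in> pdom M" "pprod M [pinv M x, x] = pone M"
  using inv_word_append[of "[x]"] by simp_all

lemma inv_right [simp]: "[x, pinv M x] \<in> pdom M" "pprod M [x, pinv M x] = pone M"
  using inv_word_append[of "[pinv M x]"] by simp_all

lemma inv_one [simp]: "pinv M (pone M) = pone M"
  using inv_left(2)[of "pone M"] by simp

lemma cancel_left:
  assumes "[a, x] \<in> pdom M" shows "pprod M [pinv M a, pprod M [a, x]] = x"
proof -
  have dom: "[pinv M a, a, x] \<in> pdom M"
    using inv_word_append[OF assms] dom_suffix[of "[pinv M x]"] by simp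
  have "pprod M [pinv M a, pprod M [a, x]] = pprod M [pinv M a, a, x]"
    using prod_assoc[of "[pinv M a]" "[a, x]" "[]"] dom by simp
  also have "\<dots> = pprod M [pprod M [pinv M a, a], x]"
    using prod_assoc[of "[]" "[pinv M a, a]" "[x]"] dom by simp
  finally show ?thesis by simp
qed

lemma inv_unique:
  assumes "[a, b] \<in> pdom M" "pprod M [a, b] = pone M" shows "b = pinv M a"
  using cancel_left[OF assms(1)] assms(2) by simp

lemma prod_inv_word: "w \<in> pdom M \<Longrightarrow> pprod M (inv_word w) = pinv M (pprod M w)"
  using inv_unique prod_append[of "inv_word w" w] inv_word_append[of w] by force

lemma inv_prod: "[x, y] \<in> pdom M \<Longrightarrow> pinv M (pprod M [x, y]) = pprod M [pinv M y, pinv M x]"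
  using prod_inv_word[of "[x, y]"] by simp

lemma autD:
  assumes "f \<in> pg_aut M"
  shows "bij f" "map f w \<in> pdom M \<longleftrightarrow> w \<in> pdom M"
    "w \<in> pdom M \<Longrightarrow> f (pprod M w) = pprod M (map f w)"
  using assms unfolding pg_aut_def by auto

lemma aut_one: "f \<in> pg_aut M \<Longrightarrow> f (pone M) = pone M"
  using autD(3)[of f "[]"] by (simp add: pone_def)

lemma aut_prod2: "f \<in> pg_aut M \<Longrightarrow> [x, y] \<in> pdom M \<Longrightarrow> f (pprod M [x, y]) = pprod M [f x, f y]"
  using autD(3)[of f "[x, y]"] by simp

lemma aut_inv_commute: assumes "f \<in> pg_aut M" shows "f (pinv M x) = pinv M (f x)"
proof (rule inv_unique)
  show "[f x, f (pinv M x)] \<in> pdom M"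
    using autD(2)[OF assms, of "[x, pinv M x]"] by simp
  show "pprod M [f x, f (pinv M x)] = pone M"
    using aut_prod2[OF assms, of x "pinv M x"] aut_one[OF assms] by simp
qed

lemma aut_inv_apply [simp]: "f \<in> pg_aut M \<Longrightarrow> inv f (f x) = x"
  and aut_apply_inv [simp]: "f \<in> pg_aut M \<Longrightarrow> f (inv f x) = x"
  using autD(1) bij_inv_eq_iff by metis+

lemma aut_inv_comp [simp]: "f \<in> pg_aut M \<Longrightarrow> inv f \<circ> f = id"
  and aut_comp_inv [simp]: "f \<in> pg_aut M \<Longrightarrow> f \<circ> inv f = id"
  by (auto simp: fun_eq_iff)

lemma aut_inv_comp_cancel [simp]: "f \<in> pg_aut M \<Longrightarrow> inv f \<circ> (f \<circ> g) = g"
  and aut_comp_inv_cancel [simp]: "f \<in> pg_aut M \<Longrightarrow> f \<circ> (inv f \<circ> g) = g"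
  by (auto simp: fun_eq_iff)

lemma map_aut_apply_inv [simp]: "f \<in> pg_aut M \<Longrightarrow> map f (map (inv f) w) = w"
  by (induct w) auto

lemma aut_comp: assumes "f \<in> pg_aut M" "g \<in> pg_aut M" shows "f \<circ> g \<in> pg_aut M"
  using autD[OF assms(1)] autD[OF assms(2)] bij_comp[of g f]
  unfolding pg_aut_def by (simp add: map_map[symmetric] del: map_map)

lemma aut_inv: assumes "f \<in> pg_aut M" shows "inv f \<in> pg_aut M"
proof -
  have dom: "map (inv f) w \<in> pdom M \<longleftrightarrow> w \<in> pdom M" for w
    using autD(2)[OF assms, of "map (inv f) w"] assms by simp
  have "inv f (pprod M w) = pprod M (map (inv f) w)" if "w \<in> pdom M" for w
    using autD(3)[OF assms, of "map (inv f) w"] dom[of w] that assms by (metis aut_inv_apply map_aut_apply_inv)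
  then show ?thesis
    using dom bij_imp_bij_inv[OF autD(1)[OF assms]] unfolding pg_aut_def by auto
qed

lemma inv_aut_eqI: "f \<in> pg_aut M \<Longrightarrow> (\<And>x. f (g x) = x) \<Longrightarrow> g = inv f"
  by (rule ext) (metis aut_inv_apply)

lemma normalizerD:
  assumes "e \<in> normalizer M"
  shows "[e, x, pinv M e] \<in> pdom M" "pconj M e \<in> pg_aut M"
    "w \<in> pdom M \<Longrightarrow> i \<le> length w \<Longrightarrow>
       nword M e i w \<in> pdom M \<and> pprod M (nword M e i w) = pprod M (e # w)"
  using assms unfolding normalizer_def nword_def by auto

lemma nword_0 [simp]: "nword M e 0 w = e # w"
  by (simp add: nword_def)

lemma normalizer_Cons_dom: "e \<in> normalizer M \<Longrightarrow> w \<in> pdom M \<Longrightarrow> e # w \<in> pdom M"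
  using normalizerD(3)[of e w 0] by simp

lemma normalizer_pair_dom: "e \<in> normalizer M \<Longrightarrow> [e, x] \<in> pdom M"
  using normalizer_Cons_dom[of e "[x]"] by simp

lemma normalizer_snoc_dom:
  assumes e: "e \<in> normalizer M" and w: "w \<in> pdom M" shows "w @ [e] \<in> pdom M"
proof -
  let ?v = "map (inv (pconj M e)) w"
  have v: "?v \<in> pdom M"
    using autD(2)[OF aut_inv[OF normalizerD(2)[OF e]]] w by simp
  have "nword M e (length ?v) ?v = w @ [e]"
    using normalizerD(2)[OF e] by (simp add: nword_def)
  with normalizerD(3)[OF e v, of "length ?v"] show ?thesis by simp
qed

lemma normalizer_snoc_inv_dom: "e \<in> normalizer M \<Longrightarrow> w \<in> pdom M \<Longrightarrow> w @ [pinv M e] \<in> pdom M"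
  using normalizer_Cons_dom[of e "inv_word w"] inv_word_dom_iff[of "e # inv_word w"] by simp

lemma normalizer_Cons_inv_dom: "e \<in> normalizer M \<Longrightarrow> w \<in> pdom M \<Longrightarrow> pinv M e # w \<in> pdom M"
  using normalizer_snoc_dom[of e "inv_word w"] inv_word_dom_iff[of "inv_word w @ [e]"] by simp

lemma pconj_normalizer:
  "a \<in> normalizer M \<Longrightarrow> pconj M a x = pprod M [a, pprod M [x, pinv M a]]"
  using prod_assoc[of "[a]" "[x, pinv M a]" "[]"] normalizerD(1)[of a x] by (simp add: pconj_def)

lemma prod_assoc_normalizer:
  assumes "a \<in> normalizer M" "b \<in> normalizer M"
  shows "pprod M [pprod M [a, b], c] = pprod M [a, pprod M [b, c]]"
proof -
  have abc: "[a, b, c] \<in> pdom M"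
    using normalizer_Cons_dom[OF assms(1) normalizer_pair_dom[OF assms(2)]] .
  show ?thesis
    using prod_assoc[of "[]" "[a, b]" "[c]"] prod_assoc[of "[a]" "[b, c]" "[]"] abc by simp
qed

lemma cancel_left_normalizer [simp]:
  "a \<in> normalizer M \<Longrightarrow> pprod M [pinv M a, pprod M [a, x]] = x"
  using cancel_left[OF normalizer_pair_dom] .

lemma pconj_prod:
  assumes e: "e \<in> normalizer M" and f: "f \<in> normalizer M"
  shows "[pprod M [e, f], x, pinv M (pprod M [e, f])] \<in> pdom M"
    "pconj M (pprod M [e, f]) x = pconj M e (pconj M f x)"
proof -
  have "[f, x, pinv M f, pinv M e] \<in> pdom M"
    using normalizer_snoc_inv_dom[OF e normalizer_Cons_dom[OF f normalizer_snoc_inv_dom[OF f, of "[x]"]]]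
    by simp
  then have dom: "[e, f, x, pinv M f, pinv M e] \<in> pdom M"
    using normalizer_Cons_dom[OF e] by simp
  have inv_ef: "pinv M (pprod M [e, f]) = pprod M [pinv M f, pinv M e]"
    using inv_prod[OF normalizer_pair_dom[OF e]] .
  from prod_assoc[of "[]" "[e, f]" "[x, pinv M f, pinv M e]"] dom
  have 1: "[pprod M [e, f], x, pinv M f, pinv M e] \<in> pdom M"
    "pprod M [e, f, x, pinv M f, pinv M e] = pprod M [pprod M [e, f], x, pinv M f, pinv M e]"
    by auto
  from prod_assoc[of "[pprod M [e, f], x]" "[pinv M f, pinv M e]" "[]"] 1 inv_ef
  show "[pprod M [e, f], x, pinv M (pprod M [e, f])] \<in> pdom M"
    by auto
  from prod_assoc[of "[pprod M [e, f], x]" "[pinv M f, pinv M e]" "[]"] 1 inv_ef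
  have "pconj M (pprod M [e, f]) x = pprod M [e, f, x, pinv M f, pinv M e]"
    by (auto simp: pconj_def)
  also have "\<dots> = pconj M e (pconj M f x)"
    using prod_assoc[of "[e]" "[f, x, pinv M f]" "[pinv M e]"] dom by (simp add: pconj_def)
  finally show "pconj M (pprod M [e, f]) x = pconj M e (pconj M f x)" .
qed

lemma pconj_prod_eq:
  "e \<in> normalizer M \<Longrightarrow> f \<in> normalizer M \<Longrightarrow> pconj M (pprod M [e, f]) = pconj M e \<circ> pconj M f"
  using pconj_prod(2) by (intro ext) auto

lemma normalizer_prod:
  assumes e: "e \<in> normalizer M" and f: "f \<in> normalizer M"
  shows "pprod M [e, f] \<in> normalizer M"
  unfolding normalizer_def
proof (intro CollectI conjI allI ballI impI)
  fix x show "[pprod M [e, f], x, pinv M (pprod M [e, f])] \<in> pdom M"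
    using pconj_prod(1)[OF e f] .
next
  show "pconj M (pprod M [e, f]) \<in> pg_aut M"
    using pconj_prod_eq[OF e f] aut_comp normalizerD(2) e f by simp
next
  fix w i assume w: "w \<in> pdom M" and i: "i \<le> length w"
  let ?ef = "pprod M [e, f]" and ?u = "nword M f i w"
  let ?pre = "map (pconj M ?ef) (take i w)"
  have u: "?u \<in> pdom M" "pprod M ?u = pprod M (f # w)"
    using normalizerD(3)[OF f w i] by auto
  have eu: "nword M e (Suc i) ?u \<in> pdom M" "pprod M (nword M e (Suc i) ?u) = pprod M (e # ?u)"
    using normalizerD(3)[OF e u(1), of "Suc i"] i by (auto simp: nword_def)
  have eu_eq: "nword M e (Suc i) ?u = ?pre @ [pconj M e f, e] @ drop i w"
    using i pconj_prod_eq[OF e f] by (simp add: nword_def)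
  have ef_eq: "nword M ?ef i w = ?pre @ [pprod M [pconj M e f, e]] @ drop i w"
    using normalizerD(3)[OF e singleton_dom[of f], of 1] by (simp add: nword_def)
  have ef: "nword M ?ef i w \<in> pdom M"
    "pprod M (nword M e (Suc i) ?u) = pprod M (nword M ?ef i w)"
    using prod_assoc[of ?pre "[pconj M e f, e]" "drop i w"] eu(1) unfolding eu_eq ef_eq by auto
  show "nword M ?ef i w \<in> pdom M" using ef(1) .
  have efw: "e # f # w \<in> pdom M"
    using normalizer_Cons_dom[OF e normalizer_Cons_dom[OF f w]] .
  have "pprod M (e # ?u) = pprod M [e, pprod M (f # w)]"
    using prod_Cons normalizer_Cons_dom[OF e u(1)] u(2) by simp
  also have "\<dots> = pprod M (e # f # w)"
    using prod_Cons[OF efw] by simp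
  also have "\<dots> = pprod M (?ef # w)"
    using prod_assoc[of "[]" "[e, f]" w] efw by simp
  finally show "pprod M (nword M ?ef i w) = pprod M (nword M ?ef 0 w)"
    using ef(2) eu(2) by simp
qed

lemma pconj_inv:
  assumes e: "e \<in> normalizer M" shows "pconj M (pinv M e) = inv (pconj M e)"
proof (rule inv_aut_eqI[OF normalizerD(2)[OF e]])
  fix x
  have "[pinv M e, x, e] \<in> pdom M"
    using normalizer_Cons_inv_dom[OF e normalizer_snoc_dom[OF e, of "[x]"]] by simp
  then have "[pinv M e, x, e, pinv M e] \<in> pdom M"
    using normalizer_snoc_inv_dom[OF e, of "[pinv M e, x, e]"] by simp
  then have dom: "[e, pinv M e, x, e, pinv M e] \<in> pdom M"
    using normalizer_Cons_dom[OF e] by simp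
  have "pconj M e (pconj M (pinv M e) x) = pprod M [e, pinv M e, x, e, pinv M e]"
    using prod_assoc[of "[e]" "[pinv M e, x, e]" "[pinv M e]"] dom by (simp add: pconj_def)
  also have "\<dots> = pprod M [pone M, x, e, pinv M e]"
    using prod_assoc[of "[]" "[e, pinv M e]" "[x, e, pinv M e]"] dom by simp
  also have "\<dots> = pprod M [pone M, x, pone M]"
    using prod_assoc[of "[pone M, x]" "[e, pinv M e]" "[]"]
      prod_assoc[of "[]" "[e, pinv M e]" "[x, e, pinv M e]"] dom by simp
  also have "\<dots> = x"
    using one_insert[of "[]" "[x, pone M]"] by simp
  finally show "pconj M e (pconj M (pinv M e) x) = x" .
qed

lemma inv_word_drop_inv_word: "inv_word (drop i (inv_word w)) = take (length w - i) w"
  and inv_word_take_inv_word: "inv_word (take i (inv_word w)) = drop (length w - i) w"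
  by (simp_all add: inv_word_def drop_rev take_rev rev_map[symmetric] take_map[symmetric]
      drop_map[symmetric] map_map o_def del: rev_map)

lemma normalizer_inv:
  assumes e: "e \<in> normalizer M" shows "pinv M e \<in> normalizer M"
  unfolding normalizer_def
proof (intro CollectI conjI allI ballI impI)
  fix x show "[pinv M e, x, pinv M (pinv M e)] \<in> pdom M"
    using normalizer_Cons_inv_dom[OF e] normalizer_snoc_dom[OF e, of "[x]"] by simp
next
  show "pconj M (pinv M e) \<in> pg_aut M"
    using pconj_inv[OF e] aut_inv normalizerD(2)[OF e] by simp
next
  fix z j assume z: "z \<in> pdom M" and j: "j \<le> length z"
  \<comment> \<open>reduce to the normalizer property of \<open>e\<close>, applied to the reversed inverse word\<close>
  let ?c = "pconj M e"
  define w where "w = inv_word z"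
  define i where "i = length z - j"
  define y where "y = map (inv ?c) w"
  have ce: "?c \<in> pg_aut M" using normalizerD(2)[OF e] .
  have w: "w \<in> pdom M" using z by (simp add: w_def)
  have y: "y \<in> pdom M" using autD(2)[OF aut_inv[OF ce], of w] w by (simp add: y_def)
  have ny: "nword M e i y \<in> pdom M" "pprod M (nword M e i y) = pprod M (e # y)"
    using normalizerD(3)[OF e y] by (auto simp: y_def w_def i_def)
  have "nword M e i y = take i w @ [e] @ map (inv ?c) (drop i w)"
    using ce by (simp add: nword_def y_def take_map[symmetric] drop_map)
  then have "inv_word (nword M e i y) = map (inv ?c) (inv_word (drop i w)) @ [pinv M e] @ inv_word (take i w)"
    using aut_inv_commute[OF aut_inv[OF ce]] by (simp add: inv_word_def rev_map)
  also have "\<dots> = nword M (pinv M e) j z"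
    using inv_word_drop_inv_word[of i z] inv_word_take_inv_word[of i z] j pconj_inv[OF e]
    by (simp add: w_def i_def nword_def)
  finally have eq: "inv_word (nword M e i y) = nword M (pinv M e) j z" .
  show "nword M (pinv M e) j z \<in> pdom M" using eq ny(1) by (metis inv_word_dom_iff)
  have "nword M e (length w) y = w @ [e]"
    using ce by (simp add: nword_def y_def)
  then have "pprod M (e # y) = pprod M (w @ [e])"
    using normalizerD(3)[OF e y, of "length w"] by (simp add: y_def)
  then have "pprod M (nword M (pinv M e) j z) = pinv M (pprod M (w @ [e]))"
    using eq ny prod_inv_word by metis
  also have "\<dots> = pprod M (pinv M e # z)"
    using prod_inv_word[OF normalizer_snoc_dom[OF e w]] by (simp add: w_def)
  finally show "pprod M (nword M (pinv M e) j z) = pprod M (nword M (pinv M e) 0 z)" by simp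
qed

lemma inv_prod_normalizer: "a \<in> normalizer M \<Longrightarrow> pinv M (pprod M [a, b]) = pprod M [pinv M b, pinv M a]"
  using inv_prod normalizer_pair_dom by blast

lemma cancel_left_normalizer_inv [simp]:
  "a \<in> normalizer M \<Longrightarrow> pprod M [a, pprod M [pinv M a, x]] = x"
  using cancel_left_normalizer[OF normalizer_inv, of a x] by simp

lemma aut_normalizer:
  assumes f: "f \<in> pg_aut M" and e: "e \<in> normalizer M" shows "f e \<in> normalizer M"
  unfolding normalizer_def
proof (intro CollectI conjI allI ballI impI)
  have map_f: "[f e, x, pinv M (f e)] = map f [e, inv f x, pinv M e]" for x
    using f by (simp add: aut_inv_commute)
  fix x show "[f e, x, pinv M (f e)] \<in> pdom M"
    using map_f autD(2)[OF f] normalizerD(1)[OF e] by metis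
next
  have "pconj M (f e) x = f (pconj M e (inv f x))" for x
    using autD(3)[OF f normalizerD(1)[OF e]] f by (simp add: aut_inv_commute pconj_def)
  then have conj: "pconj M (f e) = f \<circ> pconj M e \<circ> inv f" by auto
  then show "pconj M (f e) \<in> pg_aut M"
    using aut_comp aut_inv f normalizerD(2)[OF e] by simp
  fix w i assume w: "w \<in> pdom M" and i: "i \<le> length w"
  let ?v = "map (inv f) w"
  have v: "?v \<in> pdom M" using autD(2)[OF aut_inv[OF f]] w by simp
  have eq: "nword M (f e) i w = map f (nword M e i ?v)"
    using conj f by (simp add: nword_def take_map drop_map)
  have nv: "nword M e i ?v \<in> pdom M" "pprod M (nword M e i ?v) = pprod M (e # ?v)"
    using normalizerD(3)[OF e v] i by auto
  show "nword M (f e) i w \<in> pdom M" using eq nv autD(2)[OF f] by metis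
  have "pprod M (nword M (f e) i w) = f (pprod M (e # ?v))" using eq nv autD(3)[OF f] by metis
  also have "\<dots> = pprod M (f e # w)" using autD(3)[OF f normalizer_Cons_dom[OF e v]] f by simp
  finally show "pprod M (nword M (f e) i w) = pprod M (nword M (f e) 0 w)" by simp
qed

lemma pair_nth_dom: "w \<in> pdom M \<Longrightarrow> Suc j < length w \<Longrightarrow> [w ! j, w ! Suc j] \<in> pdom M"
  using take_nth_nth_drop dom_infix by metis

lemma pg_face_dom: assumes w: "w \<in> pdom M" and i: "i \<le> length w" shows "pg_face M i w \<in> pdom M"
proof -
  consider "i = 0" | "i = length w" | "0 < i" "i < length w" using i by linarith
  then show ?thesis
  proof cases
    case 1 then show ?thesis using w dom_suffix[of "[hd w]" "tl w"] by (cases w) (auto simp: pg_face_def)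
  next
    case 2 then show ?thesis using w dom_prefix[of "butlast w" "[last w]"]
      by (cases "w = []") (auto simp: pg_face_def)
  next
    case 3
    then have "take (i - 1) w @ [w ! (i - 1), w ! i] @ drop (Suc i) w \<in> pdom M"
      using take_nth_nth_drop[of "i - 1" w] w by simp
    then show ?thesis using prod_assoc 3 by (simp add: pg_face_def)
  qed
qed

lemma prod_take_pg_face:
  assumes w: "w \<in> pdom M" and i: "1 \<le> i" "i \<le> length w" and m: "m < length w"
  shows "pprod M (take m (pg_face M i w)) = pprod M (take (coface i m) w)"
proof (cases "m < i")
  case True
  then have "take m (pg_face M i w) = take m w"
    using i by (auto simp: pg_face_def take_butlast take_append min_def)
  then show ?thesis using True by (simp add: coface_def)
next
  case False
  then have i': "i < length w" using m by simp
  let ?u = "take (i - 1) w" and ?v = "take (m - i) (drop (Suc i) w)"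
  have "take (Suc m) w = take (Suc m) (?u @ [w ! (i - 1), w ! i] @ drop (Suc i) w)"
    using arg_cong[OF take_nth_nth_drop[of "i - 1" w], of "take (Suc m)"] i' i by simp
  also have "\<dots> = ?u @ [w ! (i - 1), w ! i] @ ?v"
  proof -
    have "Suc m - (i - 1) = Suc (Suc (m - i))" "i - 1 \<le> Suc m" using False i by auto
    then show ?thesis using i' by (auto simp: take_append min_def)
  qed
  finally have 1: "take (Suc m) w = ?u @ [w ! (i - 1), w ! i] @ ?v" .
  have 2: "take m (pg_face M i w) = ?u @ [pprod M [w ! (i - 1), w ! i]] @ ?v"
    using False i i' by (auto simp: pg_face_def take_append min_def Suc_diff_le)
  show ?thesis
    using prod_assoc[of ?u "[w ! (i - 1), w ! i]" ?v] take_dom[OF w, of "Suc m"] False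
    unfolding 1 2 by (simp add: coface_def 1)
qed

lemma prod_take_pg_degen:
  assumes w: "w \<in> pdom M" and i: "i \<le> length w"
  shows "pprod M (take m (pg_degen M i w)) = pprod M (take (codegeneracy i m) w)"
proof (cases "m \<le> i")
  case True then show ?thesis using i by (simp add: pg_degen_def take_append min_def codegeneracy_def)
next
  case False
  have 1: "take m (pg_degen M i w) = take i w @ [pone M] @ take (m - 1 - i) (drop i w)"
  proof -
    have "m - i = Suc (m - Suc i)" using False by simp
    then show ?thesis using False i by (simp add: pg_degen_def take_append min_def)
  qed
  have 2: "take (m - 1) w = take i w @ take (m - 1 - i) (drop i w)"
    using False take_add[of i "m - 1 - i" w] by simp
  have "pprod M (take m (pg_degen M i w)) = pprod M (take (m - 1) w)"
    using one_insert 1 2 take_dom[OF w, of "m - 1"] by metis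
  then show ?thesis using False by (simp add: codegeneracy_def)
qed

lemma append_prod_take_dom: "u @ v \<in> pdom M \<Longrightarrow> u @ [pprod M (take j v)] \<in> pdom M"
  using prod_assoc[of u "take j v" "drop j v"] dom_prefix[of "u @ [pprod M (take j v)]" "drop j v"] by simp

subsection \<open>Morphisms of the category of automorphisms\<close>

lemma pconj_eqI:
  assumes e: "e \<in> normalizer M" and eq: "pprod M [y, e] = pprod M [e, z]"
  shows "y = pconj M e z"
proof -
  have dom: "[y, e, pinv M e] \<in> pdom M"
    using normalizer_snoc_inv_dom[OF e normalizer_snoc_dom[OF e, of "[y]"]] by simp
  have "pconj M e z = pprod M [pprod M [e, z], pinv M e]"
    using prod_assoc[of "[]" "[e, z]" "[pinv M e]"] normalizerD(1)[OF e] by (simp add: pconj_def)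
  also have "\<dots> = pprod M [y, e, pinv M e]"
    using prod_assoc[of "[]" "[y, e]" "[pinv M e]"] dom eq by simp
  also have "\<dots> = y"
    using prod_assoc[of "[y]" "[e, pinv M e]" "[]"] dom by simp
  finally show ?thesis by simp
qed

lemma aut_morD:
  assumes "aut_mor M Phi e Psi"
  shows "Phi \<in> pg_aut M" "Psi \<in> pg_aut M" "e \<in> normalizer M" "Phi = pconj M e \<circ> Psi"
proof -
  show e: "e \<in> normalizer M" and "Phi \<in> pg_aut M" "Psi \<in> pg_aut M"
    using assms unfolding aut_mor_def by auto
  obtain F where H: "pg_homotopy M F" and F0: "\<forall>w\<in>pdom M. F w (Suc (length w)) = map Phi w"
    and F1: "\<forall>w\<in>pdom M. F w 0 = map Psi w" and Fe: "F [pone M] 1 = [e]"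
    using assms unfolding aut_mor_def by blast
  have Hdom: "\<And>w k. w \<in> pdom M \<Longrightarrow> k \<le> Suc (length w) \<Longrightarrow> F w k \<in> pdom M \<and> length (F w k) = length w"
   and Hface: "\<And>w k i. w \<in> pdom M \<Longrightarrow> k \<le> Suc (length w) \<Longrightarrow> i \<le> length w \<Longrightarrow> 0 < length w \<Longrightarrow>
        F (pg_face M i w) (d1_face i k) = pg_face M i (F w k)"
    using H unfolding pg_homotopy_def by blast+
  have pair: "\<exists>a b. F w k = [a, b]" if "w \<in> pdom M" "length w = 2" "k \<le> 3" for w k
    using Hdom[OF that(1), of k] that(2,3) by (auto simp: length_Suc_conv numeral_2_eq_2)
  \<comment> \<open>the edge \<open>F([x],\<iota>\<^sub>1)\<close> is computed from the two triangles over \<open>[x|1]\<close> and \<open>[1|x]\<close>\<close>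
  show "Phi = pconj M e \<circ> Psi"
  proof (rule ext)
    fix x
    obtain a b where ab: "F [x, pone M] 2 = [a, b]" using pair[of "[x, pone M]" 2] by auto
    have "F [x] 2 = [a]" using Hface[of "[x, pone M]" 2 2] ab by (simp add: pg_face_def d1_face_def)
    then have a: "a = Phi x" using F0[rule_format, OF singleton_dom[of x]] by (simp add: numeral_2_eq_2)
    have "F [pone M] 1 = [b]" using Hface[of "[x, pone M]" 2 0] ab by (simp add: pg_face_def d1_face_def)
    then have b: "b = e" using Fe by simp
    have Fx: "F [x] 1 = [pprod M [Phi x, e]]"
      using Hface[of "[x, pone M]" 2 1] ab a b by (simp add: pg_face_def d1_face_def)
    obtain c d where cd: "F [pone M, x] 1 = [c, d]" using pair[of "[pone M, x]" 1] by auto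
    have "F [pone M] 1 = [c]" using Hface[of "[pone M, x]" 1 2] cd by (simp add: pg_face_def d1_face_def)
    then have c: "c = e" using Fe by simp
    have "F [x] 0 = [d]" using Hface[of "[pone M, x]" 1 0] cd by (simp add: pg_face_def d1_face_def)
    then have d: "d = Psi x" using F1 by simp
    have "F [x] 1 = [pprod M [e, Psi x]]"
      using Hface[of "[pone M, x]" 1 1] cd c d by (simp add: pg_face_def d1_face_def)
    with Fx show "Phi x = (pconj M e \<circ> Psi) x" using pconj_eqI[OF e] by simp
  qed
qed

text \<open>On the simplex \<open>(w, k)\<close> of \<open>M \<times> \<Delta>[1]\<close> the \<open>k\<close>-th letter \<open>x\<close> becomes \<open>\<Phi>(x) e\<close>, which
  equals \<open>e \<Psi>(x)\<close>; this is what makes the face relations hold.\<close>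

definition conj_homotopy :: "('a \<Rightarrow> 'a) \<Rightarrow> 'a \<Rightarrow> ('a \<Rightarrow> 'a) \<Rightarrow> 'a list \<Rightarrow> nat \<Rightarrow> 'a list" where
  "conj_homotopy Phi e Psi w k =
     map (\<lambda>j. if Suc j < k then Phi (w ! j) else if Suc j = k then pprod M [Phi (w ! j), e]
       else Psi (w ! j)) [0..<length w]"

lemma conj_homotopy_length [simp]: "length (conj_homotopy Phi e Psi w k) = length w"
  by (simp add: conj_homotopy_def)

lemma conj_homotopy_nth:
  "j < length w \<Longrightarrow> conj_homotopy Phi e Psi w k ! j =
     (if Suc j < k then Phi (w ! j) else if Suc j = k then pprod M [Phi (w ! j), e] else Psi (w ! j))"
  by (simp add: conj_homotopy_def)

lemma conj_homotopy_top: "conj_homotopy Phi e Psi w (Suc (length w)) = map Phi w"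
  and conj_homotopy_bot: "conj_homotopy Phi e Psi w 0 = map Psi w"
  by (auto intro: nth_equalityI simp: conj_homotopy_nth)

lemma conj_homotopy_middle:
  "1 \<le> k \<Longrightarrow> k \<le> length w \<Longrightarrow> conj_homotopy Phi e Psi w k =
     take (k - 1) (map Phi w) @ [pprod M [Phi (w ! (k - 1)), e]] @ drop k (map Psi w)"
  by (intro nth_equalityI) (auto simp: conj_homotopy_nth nth_append min_def)

context
  fixes Phi Psi :: "'a \<Rightarrow> 'a" and e :: 'a
  assumes Phi: "Phi \<in> pg_aut M" and Psi: "Psi \<in> pg_aut M" and e: "e \<in> normalizer M"
    and conj: "Phi = pconj M e \<circ> Psi"
begin

lemma conj_homotopy_dom:
  assumes w: "w \<in> pdom M" and k: "k \<le> Suc (length w)"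
  shows "conj_homotopy Phi e Psi w k \<in> pdom M"
proof (cases "k = 0 \<or> k = Suc (length w)")
  case True then show ?thesis
    using conj_homotopy_top conj_homotopy_bot autD(2)[OF Phi] autD(2)[OF Psi] w by auto
next
  case False
  then have k: "1 \<le> k" "k \<le> length w" using k by auto
  have "map Psi w \<in> pdom M" using autD(2)[OF Psi] w by simp
  then have "nword M e k (map Psi w) \<in> pdom M" using normalizerD(3)[OF e] k by simp
  moreover have "nword M e k (map Psi w) = map Phi (take k w) @ [e] @ drop k (map Psi w)"
    using conj by (simp add: nword_def take_map)
  moreover have "take k w = take (k - 1) w @ [w ! (k - 1)]"
    using take_Suc_conv_app_nth[of "k - 1" w] k by simp
  ultimately have "take (k - 1) (map Phi w) @ [Phi (w ! (k - 1)), e] @ drop k (map Psi w) \<in> pdom M"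
    by (simp add: take_map)
  from prod_assoc[OF this] show ?thesis using conj_homotopy_middle[OF k] by simp
qed

lemma conj_letter_prod:
  assumes xy: "[x, y] \<in> pdom M"
  shows "pprod M [Phi (pprod M [x, y]), e] = pprod M [Phi x, pprod M [Phi y, e]]"
    "pprod M [Phi (pprod M [x, y]), e] = pprod M [pprod M [Phi x, e], Psi y]"
proof -
  have p: "[Psi x, Psi y] \<in> pdom M" using autD(2)[OF Psi, of "[x, y]"] xy by simp
  have V2: "[Phi x, Phi y, e] \<in> pdom M" "pprod M [Phi x, Phi y, e] = pprod M [e, Psi x, Psi y]"
    using normalizerD(3)[OF e p, of 2] conj by (auto simp: nword_def numeral_2_eq_2)
  have V1: "[Phi x, e, Psi y] \<in> pdom M" "pprod M [Phi x, e, Psi y] = pprod M [e, Psi x, Psi y]"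
    using normalizerD(3)[OF e p, of 1] conj by (auto simp: nword_def)
  have "pprod M [Phi (pprod M [x, y]), e] = pprod M [Phi x, Phi y, e]"
    using aut_prod2[OF Phi xy] prod_assoc[of "[]" "[Phi x, Phi y]" "[e]"] V2 by simp
  then show "pprod M [Phi (pprod M [x, y]), e] = pprod M [Phi x, pprod M [Phi y, e]]"
    and "pprod M [Phi (pprod M [x, y]), e] = pprod M [pprod M [Phi x, e], Psi y]"
    using prod_assoc[of "[Phi x]" "[Phi y, e]" "[]"] prod_assoc[of "[]" "[Phi x, e]" "[Psi y]"] V1 V2
    by simp_all
qed

lemma conj_homotopy_face:
  assumes w: "w \<in> pdom M" and k: "k \<le> Suc (length w)" and i: "i \<le> length w" and n: "0 < length w"
  shows "conj_homotopy Phi e Psi (pg_face M i w) (d1_face i k) = pg_face M i (conj_homotopy Phi e Psi w k)"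
proof (rule nth_equalityI)
  let ?F = "conj_homotopy Phi e Psi"
  have len: "length (pg_face M i w) = length w - 1" "length (pg_face M i (?F w k)) = length w - 1"
    using pg_face_length[of w i] pg_face_length[of "?F w k" i] i n by simp_all
  then show "length (?F (pg_face M i w) (d1_face i k)) = length (pg_face M i (?F w k))" by simp
  fix j assume "j < length (?F (pg_face M i w) (d1_face i k))"
  then have j: "j < length w - 1" using len by simp
  have adj: "[w ! j, w ! Suc j] \<in> pdom M" using pair_nth_dom[OF w] j by simp
  note prods = aut_prod2[OF Phi adj] aut_prod2[OF Psi adj] conj_letter_prod[OF adj]
  define k' where "k' = d1_face i k"
  have k': "k' = (if i < k then k - 1 else k)" by (simp add: k'_def d1_face_def)
  define x where "x = pg_face M i w ! j"
  have lhs: "?F (pg_face M i w) k' ! j = (if Suc j < k' then Phi x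
     else if Suc j = k' then pprod M [Phi x, e] else Psi x)"
    using conj_homotopy_nth[of j "pg_face M i w"] len j by (simp add: x_def)
  have rhs: "pg_face M i (?F w k) ! j = (if i = 0 then ?F w k ! Suc j else if j < i - 1 then ?F w k ! j
     else if j = i - 1 then pprod M [?F w k ! j, ?F w k ! Suc j] else ?F w k ! Suc j)"
    using pg_face_nth[of i "?F w k" j] i j by simp
  have x: "x = (if i = 0 then w ! Suc j else if j < i - 1 then w ! j
     else if j = i - 1 then pprod M [w ! j, w ! Suc j] else w ! Suc j)"
    using pg_face_nth[of i w j] i j by (simp add: x_def)
  have F0: "?F w k ! j = (if Suc j < k then Phi (w ! j) else if Suc j = k then pprod M [Phi (w ! j), e]
      else Psi (w ! j))" using conj_homotopy_nth[of j w] j by simp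
  have F1: "?F w k ! Suc j = (if Suc (Suc j) < k then Phi (w ! Suc j)
      else if Suc (Suc j) = k then pprod M [Phi (w ! Suc j), e] else Psi (w ! Suc j))"
    using conj_homotopy_nth[of "Suc j" w] j by simp
  consider "i = 0" | "0 < i" "j < i - 1" | "0 < i" "j = i - 1" | "0 < i" "i - 1 < j" by linarith
  then have "?F (pg_face M i w) k' ! j = pg_face M i (?F w k) ! j"
  proof cases
    case 3
    consider "Suc i < k" | "Suc i = k" | "i = k" | "k < i" by linarith
    then show ?thesis unfolding lhs rhs using x F0 F1 prods 3 k' by cases auto
  qed (use lhs rhs x F0 F1 k' in auto)
  then show "?F (pg_face M i w) (d1_face i k) ! j = pg_face M i (?F w k) ! j"
    by (simp add: k'_def)
qed

lemma conj_homotopy_degen: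
  assumes i: "i \<le> length w"
  shows "conj_homotopy Phi e Psi (pg_degen M i w) (d1_degen i k) = pg_degen M i (conj_homotopy Phi e Psi w k)"
proof (rule nth_equalityI)
  let ?F = "conj_homotopy Phi e Psi"
  show "length (?F (pg_degen M i w) (d1_degen i k)) = length (pg_degen M i (?F w k))" using i by simp
  fix j assume "j < length (?F (pg_degen M i w) (d1_degen i k))"
  then have j: "j \<le> length w" using i by simp
  have one: "Phi (pone M) = pone M" "Psi (pone M) = pone M" using aut_one Phi Psi by auto
  have lhs: "?F (pg_degen M i w) (d1_degen i k) ! j = (if Suc j < d1_degen i k then Phi (pg_degen M i w ! j)
     else if Suc j = d1_degen i k then pprod M [Phi (pg_degen M i w ! j), e] else Psi (pg_degen M i w ! j))"
    using conj_homotopy_nth[of j "pg_degen M i w"] i j by simp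
  have rhs: "pg_degen M i (?F w k) ! j = (if j < i then ?F w k ! j else if j = i then pone M else ?F w k ! (j - 1))"
    using pg_degen_nth[of i "?F w k" j] i j by simp
  have w: "pg_degen M i w ! j = (if j < i then w ! j else if j = i then pone M else w ! (j - 1))"
    using pg_degen_nth[of i w j] i j by simp
  consider "j < i" | "j = i" | "i < j" by linarith
  then show "?F (pg_degen M i w) (d1_degen i k) ! j = pg_degen M i (?F w k) ! j"
  proof cases
    case 1 then show ?thesis using lhs rhs w conj_homotopy_nth[of j w] i by (auto simp: d1_degen_def)
  next
    case 2 then show ?thesis using lhs rhs w one by (auto simp: d1_degen_def)
  next
    case 3 then show ?thesis using lhs rhs w conj_homotopy_nth[of "j - 1" w] j by (auto simp: d1_degen_def)
  qed
qed

lemma aut_morI: "aut_mor M Phi e Psi"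
proof -
  let ?F = "conj_homotopy Phi e Psi"
  have "pg_homotopy M ?F"
    unfolding pg_homotopy_def using conj_homotopy_dom conj_homotopy_face conj_homotopy_degen by auto
  moreover have "?F [pone M] 1 = [e]" using aut_one[OF Phi] by (simp add: conj_homotopy_def)
  ultimately show ?thesis
    unfolding aut_mor_def using Phi Psi e conj_homotopy_top conj_homotopy_bot by blast
qed

end

lemma ratio_telescope:
  assumes "a \<in> normalizer M" "b \<in> normalizer M"
  shows "pprod M [pprod M [pinv M a, b], pprod M [pinv M b, c]] = pprod M [pinv M a, c]"
  using prod_assoc_normalizer[OF normalizer_inv[OF assms(1)] assms(2)]
    cancel_left_normalizer[OF normalizer_inv[OF assms(2)]] by simp

lemma pg_face_ratios:
  assumes A: "\<And>j. A j \<in> normalizer M" and i: "i \<le> n"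
  shows "pg_face M i (pg_ratios M A n) = pg_ratios M (A \<circ> coface i) (n - 1)"
proof (cases "n = 0")
  case True then show ?thesis using i by (simp add: pg_face_def pg_ratios_def)
next
  case False
  then have len: "length (pg_face M i (pg_ratios M A n)) = n - 1"
    using pg_face_length[of "pg_ratios M A n" i] i by simp
  show ?thesis
  proof (rule nth_equalityI)
    fix j assume "j < length (pg_face M i (pg_ratios M A n))"
    then show "pg_face M i (pg_ratios M A n) ! j = pg_ratios M (A \<circ> coface i) (n - 1) ! j"
      using pg_face_nth[of i "pg_ratios M A n" j] i len
      by (auto simp: pg_ratios_def coface_def ratio_telescope A)
  qed (use len in simp)
qed

lemma pg_degen_ratios:
  assumes i: "i \<le> n"
  shows "pg_degen M i (pg_ratios M A n) = pg_ratios M (A \<circ> codegeneracy i) (Suc n)"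
proof (rule nth_equalityI)
  fix j assume "j < length (pg_degen M i (pg_ratios M A n))"
  then have j: "j \<le> n" using i by simp
  then show "pg_degen M i (pg_ratios M A n) ! j = pg_ratios M (A \<circ> codegeneracy i) (Suc n) ! j"
    using pg_degen_nth[of i "pg_ratios M A n" j] i
    by (auto simp: pg_ratios_def codegeneracy_def nth_append simp del: upt_Suc)
qed (use i in simp)

lemma nerve_simplex_eq_last_faces:
  assumes s: "nerve_simplex M (Suc (Suc m)) s" and s': "nerve_simplex M (Suc (Suc m)) s'"
    and last: "nerve_face M (Suc (Suc m)) s = nerve_face M (Suc (Suc m)) s'"
    and before_last: "nerve_face M (Suc m) s = nerve_face M (Suc m) s'"
  shows "s = s'"
proof -
  obtain os xs p q where os: "s = (xs @ [p, q], os)" "length xs = Suc m"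
    using nerve_simplexD(1)[OF s] ex_snoc2[of "fst s"] by (cases s) fastforce
  obtain ys u v where es: "os = ys @ [u, v]" "length ys = m"
    using nerve_simplexD(2)[OF s] ex_snoc2[of os] os by force
  obtain os' xs' p' q' where os': "s' = (xs' @ [p', q'], os')" "length xs' = Suc m"
    using nerve_simplexD(1)[OF s'] ex_snoc2[of "fst s'"] by (cases s') fastforce
  obtain ys' u' v' where es': "os' = ys' @ [u', v']" "length ys' = m"
    using nerve_simplexD(2)[OF s'] ex_snoc2[of os'] os' by force
  have "u \<in> normalizer M"
    using aut_morD(3)[OF nerve_simplexD(4)[OF s, of m]] os es by (simp add: nth_append)
  moreover have "xs = xs'" "p = p'" "ys = ys'" "u = u'"
    using last os os' es es' by (simp_all add: nerve_face_def pg_face_def butlast_append)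
  moreover have "q = q'" "pprod M [u, v] = pprod M [u', v']"
    using before_last os os' es es' by (simp_all add: nerve_face_def pg_face_def nth_append)
  ultimately show ?thesis
    using os os' es es' cancel_left_normalizer by metis
qed

end

section \<open>From twisting functions to twisting pairs\<close>

definition twist_aut :: "(nat \<Rightarrow> 'a list \<Rightarrow> 'b aut_simplex) \<Rightarrow> 'a \<Rightarrow> 'b \<Rightarrow> 'b" where
  "twist_aut phi g = hd (fst (phi 1 [g]))"

definition twist_eta :: "(nat \<Rightarrow> 'a list \<Rightarrow> 'b aut_simplex) \<Rightarrow> 'a \<Rightarrow> 'a \<Rightarrow> 'b" where
  "twist_eta phi g h = hd (snd (phi 2 [g, h]))"

locale two_pgroups = G: pgroup M2 + H: pgroup M1
  for M2 :: "'a partial_group" and M1 :: "'b partial_group"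
begin

lemma triple_dom:
  assumes "[g, h, k] \<in> pdom M2"
  shows "[g, h] \<in> pdom M2" "[h, k] \<in> pdom M2" "[g, pprod M2 [h, k]] \<in> pdom M2"
    "[pprod M2 [g, h], k] \<in> pdom M2"
  using G.dom_prefix[of "[g, h]" "[k]"] G.dom_suffix[of "[g]" "[h, k]"] G.prod_assoc[of "[g]" "[h, k]" "[]"]
    G.prod_assoc[of "[]" "[g, h]" "[k]"] assms by auto

context
  fixes phi :: "nat \<Rightarrow> 'a list \<Rightarrow> 'b aut_simplex"
  assumes tf: "twisting_function M2 M1 phi"
begin

lemma phi_1: "phi 1 [g] = ([twist_aut phi g], [])"
  using nerve_simplexD(1,2)[OF twisting_functionD(1)[OF tf, of "[g]" 1]]
    list_of_length_1[of "fst (phi 1 [g])"] by (simp add: prod_eq_iff twist_aut_def)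

lemma twist_aut_aut: "twist_aut phi g \<in> pg_aut M1"
  using nerve_simplexD(3)[OF twisting_functionD(1)[OF tf, of "[g]" 1]] phi_1 by simp

lemma phi_2:
  assumes gh: "[g, h] \<in> pdom M2"
  shows "phi 2 [g, h] = ([twist_aut phi g, twist_aut phi (pprod M2 [g, h]) \<circ> inv (twist_aut phi h)], [twist_eta phi g h])"
proof -
  let ?s = "phi 2 [g, h]"
  have s: "nerve_simplex M1 1 ?s" using twisting_functionD(1)[OF tf gh, of 2] by simp
  obtain f0 f1 where objs: "fst ?s = [f0, f1]"
    using list_of_length_2[of "fst ?s"] nerve_simplexD(1)[OF s] by auto
  have etas: "snd ?s = [twist_eta phi g h]"
    using list_of_length_1[of "snd ?s"] nerve_simplexD(2)[OF s] by (auto simp: twist_eta_def)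
  have "phi 1 [g] = nerve_face M1 1 ?s"
    using twisting_functionD(2)[OF tf gh, of 2 2] by (simp add: pg_face_def)
  then have f0: "f0 = twist_aut phi g" using phi_1 objs by (simp add: nerve_face_def)
  have "phi 1 [pprod M2 [g, h]] = nerve_mult M1 (nerve_face M1 0 ?s) (phi 1 [h])"
    using twisting_functionD(3)[OF tf gh, of 2] by (simp add: pg_face_def)
  then have "twist_aut phi (pprod M2 [g, h]) = f1 \<circ> twist_aut phi h"
    using phi_1 objs etas by (simp add: nerve_face_def nerve_mult_def)
  then have "twist_aut phi (pprod M2 [g, h]) \<circ> inv (twist_aut phi h) = f1"
    using twist_aut_aut[of h] by (simp add: comp_assoc)
  then show ?thesis using objs etas f0 by (simp add: prod_eq_iff)
qed

lemma low_values_twist: "low_values M2 M1 (twist_aut phi) (twist_eta phi) phi"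
  unfolding low_values_def using phi_1 phi_2 by blast

lemma aut_mor_twist:
  "[g, h] \<in> pdom M2 \<Longrightarrow>
     aut_mor M1 (twist_aut phi g) (twist_eta phi g h) (twist_aut phi (pprod M2 [g, h]) \<circ> inv (twist_aut phi h))"
  using nerve_simplexD(4)[OF twisting_functionD(1)[OF tf, of "[g, h]" 2], of 0] phi_2 by simp

lemma twist_eta_normalizer: "[g, h] \<in> pdom M2 \<Longrightarrow> twist_eta phi g h \<in> normalizer M1"
  using H.aut_morD(3)[OF aut_mor_twist] .

lemma phi_2_one_left: "phi 2 [pone M2, g] = nerve_unit M1 1"
  using twisting_functionD(5)[OF tf G.singleton_dom[of g], of 1] by (simp add: pg_degen_def numeral_2_eq_2)

lemma twist_aut_one: "twist_aut phi (pone M2) = id"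
  using phi_2_one_left[of "pone M2"] phi_2[of "pone M2" "pone M2"] by (simp add: nerve_unit_def)

lemma twist_eta_one_left: "twist_eta phi (pone M2) g = pone M1"
  using phi_2_one_left[of g] phi_2[of "pone M2" g] by (simp add: nerve_unit_def)

lemma twist_eta_one_right: "twist_eta phi g (pone M2) = pone M1"
  using twisting_functionD(4)[OF tf G.singleton_dom[of g], of 1 1] phi_2[of g "pone M2"] phi_1[of g]
  by (simp add: pg_degen_def nerve_degen_def numeral_2_eq_2)

text \<open>The cocycle identity is read off the 2-simplex \<open>\<phi>\<^sub>3[g|h|k]\<close>: its faces \<open>d\<^sub>3\<close>, \<open>d\<^sub>2\<close>
  and \<open>d\<^sub>1\<close> give \<open>\<eta>(g,h)\<close>, \<open>\<eta>(g,hk)\<close> and \<open>\<eta>(gh,k)\<close> in terms of its two morphisms.\<close>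

lemma twist_eta_cocycle:
  assumes b: "[g, h, k] \<in> pdom M2"
  shows "pprod M1 [twist_aut phi g (twist_eta phi h k), twist_eta phi g (pprod M2 [h, k])] =
    pprod M1 [twist_eta phi g h, twist_eta phi (pprod M2 [g, h]) k]"
proof -
  let ?s = "phi 3 [g, h, k]"
  have s: "nerve_simplex M1 2 ?s" using twisting_functionD(1)[OF tf b, of 3] by simp
  obtain F0 F1 F2 where objs: "fst ?s = [F0, F1, F2]"
    using list_of_length_3[of "fst ?s"] nerve_simplexD(1)[OF s] by auto
  obtain e1 e2 where etas: "snd ?s = [e1, e2]"
    using list_of_length_2[of "snd ?s"] nerve_simplexD(2)[OF s] by auto
  note dom = triple_dom[OF b]
  have "phi 2 [g, h] = nerve_face M1 2 ?s"
    using twisting_functionD(2)[OF tf b, of 3 3] by (simp add: pg_face_def)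
  then have d3: "F0 = twist_aut phi g" "e1 = twist_eta phi g h"
    using phi_2[OF dom(1)] objs etas by (simp_all add: nerve_face_def pg_face_def)
  have "phi 2 [g, pprod M2 [h, k]] = nerve_face M1 1 ?s"
    using twisting_functionD(2)[OF tf b, of 3 2] by (simp add: pg_face_def)
  then have d2: "twist_eta phi g (pprod M2 [h, k]) = pprod M1 [e1, e2]"
    using phi_2[OF dom(3)] objs etas by (simp add: nerve_face_def pg_face_def)
  have "phi 2 [pprod M2 [g, h], k] = nerve_mult M1 (nerve_face M1 0 ?s) (phi 2 [h, k])"
    using twisting_functionD(3)[OF tf b, of 3] by (simp add: pg_face_def)
  then have d1: "twist_eta phi (pprod M2 [g, h]) k = pprod M1 [F1 (twist_eta phi h k), e2]"
    using phi_2[OF dom(4)] phi_2[OF dom(2)] objs etas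
    by (simp add: nerve_face_def nerve_mult_def pg_face_def)
  have m0: "aut_mor M1 F0 e1 F1" and m1: "aut_mor M1 F1 e2 F2"
    using nerve_simplexD(4)[OF s, of 0] nerve_simplexD(4)[OF s, of 1] objs etas by simp_all
  have N: "e1 \<in> normalizer M1" "e2 \<in> normalizer M1" "F1 (twist_eta phi h k) \<in> normalizer M1"
    using H.aut_morD(3)[OF m0] H.aut_morD(3)[OF m1]
      H.aut_normalizer[OF H.aut_morD(2)[OF m0] twist_eta_normalizer[OF dom(2)]] by auto
  have "twist_aut phi g (twist_eta phi h k) = pconj M1 e1 (F1 (twist_eta phi h k))"
    using H.aut_morD(4)[OF m0] d3(1) by simp
  also have "\<dots> = pprod M1 [e1, pprod M1 [F1 (twist_eta phi h k), pinv M1 e1]]"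
    using H.pconj_normalizer N by blast
  finally show ?thesis
    unfolding d1 d2 d3(2)[symmetric]
    using N by (simp add: H.prod_assoc_normalizer H.normalizer_prod H.normalizer_inv)
qed

lemma twisting_pair_twist: "twisting_pair M2 M1 (twist_aut phi) (twist_eta phi)"
  unfolding twisting_pair_def
  using twist_aut_aut twist_eta_normalizer aut_mor_twist twist_aut_one twist_eta_one_left
    twist_eta_one_right twist_eta_cocycle by blast

end

lemma twisting_function_unique:
  assumes phi: "twisting_function M2 M1 phi" and psi: "twisting_function M2 M1 psi"
    and low1: "\<And>g. psi 1 [g] = phi 1 [g]"
    and low2: "\<And>g h. [g, h] \<in> pdom M2 \<Longrightarrow> psi 2 [g, h] = phi 2 [g, h]"
  shows "1 \<le> n \<Longrightarrow> b \<in> pdom M2 \<Longrightarrow> length b = n \<Longrightarrow> psi n b = phi n b"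
proof (induction n arbitrary: b rule: less_induct)
  case (less n)
  consider "n = 1" | "n = 2" | m where "n = Suc (Suc (Suc m))" using less.prems(1)
    by (metis One_nat_def Suc_1 le_SucE le_numeral_extra(4) not0_implies_Suc not_less_eq_eq)
  then show ?case
  proof cases
    case 1 then show ?thesis using less.prems list_of_length_1[of b] low1 by (metis One_nat_def)
  next
    case 2 then show ?thesis using less.prems list_of_length_2[of b] low2 by metis
  next
    case (3 m)
    note b = less.prems(2,3)
    have faces: "psi (n - 1) (pg_face M2 i b) = phi (n - 1) (pg_face M2 i b)" if "i \<le> n" for i
      using less.IH[of "n - 1" "pg_face M2 i b"] G.pg_face_dom[of b i] pg_face_length[of b i] that b 3
      by simp
    show ?thesis
    proof (rule H.nerve_simplex_eq_last_faces)
      show "nerve_simplex M1 (Suc (Suc m)) (psi n b)" "nerve_simplex M1 (Suc (Suc m)) (phi n b)"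
        using twisting_functionD(1)[OF psi b] twisting_functionD(1)[OF phi b] 3 by simp_all
      show "nerve_face M1 (Suc (Suc m)) (psi n b) = nerve_face M1 (Suc (Suc m)) (phi n b)"
        using twisting_functionD(2)[OF psi b, of n] twisting_functionD(2)[OF phi b, of n] faces[of n] 3
        by simp
      show "nerve_face M1 (Suc m) (psi n b) = nerve_face M1 (Suc m) (phi n b)"
        using twisting_functionD(2)[OF psi b, of "n - 1"] twisting_functionD(2)[OF phi b, of "n - 1"]
          faces[of "n - 1"] 3 by simp
    qed
  qed
qed

end

section \<open>From twisting pairs to twisting functions\<close>

locale twisting_pair_data = two_pgroups M2 M1
  for M2 :: "'a partial_group" and M1 :: "'b partial_group" +
  fixes t :: "'a \<Rightarrow> 'b \<Rightarrow> 'b" and eta :: "'a \<Rightarrow> 'a \<Rightarrow> 'b"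
  assumes twisting_pair: "twisting_pair M2 M1 t eta"
begin

lemma t_aut: "t g \<in> pg_aut M1"
  and eta_normalizer: "[g, h] \<in> pdom M2 \<Longrightarrow> eta g h \<in> normalizer M1"
  and t_one: "t (pone M2) = id"
  and eta_one_left: "eta (pone M2) g = pone M1"
  and eta_one_right: "eta g (pone M2) = pone M1"
  and eta_cocycle: "[g, h, k] \<in> pdom M2 \<Longrightarrow>
     pprod M1 [t g (eta h k), eta g (pprod M2 [h, k])] = pprod M1 [eta g h, eta (pprod M2 [g, h]) k]"
  using twisting_pair unfolding twisting_pair_def by blast+

lemma t_pconj: "[g, h] \<in> pdom M2 \<Longrightarrow> t g = pconj M1 (eta g h) \<circ> (t (pprod M2 [g, h]) \<circ> inv (t h))"
  using twisting_pair H.aut_morD(4) unfolding twisting_pair_def by blast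

definition twist_simplex :: "'a \<Rightarrow> (nat \<Rightarrow> 'a) \<Rightarrow> nat \<Rightarrow> 'b aut_simplex" where
  "twist_simplex g q n =
     (map (\<lambda>j. t (pprod M2 [g, q j]) \<circ> inv (t (q j))) [0..<n], pg_ratios M1 (\<lambda>j. eta g (q j)) (n - 1))"

definition pair_phi :: "'a list \<Rightarrow> 'b aut_simplex" where
  "pair_phi b = twist_simplex (hd b) (\<lambda>j. pprod M2 (take j (tl b))) (length b)"

lemma twist_simplex_cong:
  "(\<And>j. j < n \<Longrightarrow> q j = q' j) \<Longrightarrow> twist_simplex g q n = twist_simplex g q' n"
  by (auto simp: twist_simplex_def pg_ratios_def)

lemma nerve_simplex_twist_simplex:
  assumes q: "\<And>j. [g, q j] \<in> pdom M2" and n: "0 < n"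
  shows "nerve_simplex M1 (n - 1) (twist_simplex g q n)"
proof -
  let ?O = "\<lambda>j. t (pprod M2 [g, q j]) \<circ> inv (t (q j))" and ?A = "\<lambda>j. eta g (q j)"
  have O: "?O j \<in> pg_aut M1" for j using t_aut H.aut_comp H.aut_inv by blast
  have A: "?A j \<in> normalizer M1" for j using eta_normalizer[OF q] .
  have "?O j = inv (pconj M1 (?A j)) \<circ> t g" for j
    using t_pconj[OF q, of j] H.normalizerD(2)[OF A] by (simp add: comp_assoc)
  then have "?O j = pconj M1 (pprod M1 [pinv M1 (?A j), ?A (Suc j)]) \<circ> ?O (Suc j)" for j
    using H.pconj_inv[OF A] H.pconj_prod_eq[OF H.normalizer_inv[OF A] A]
      H.normalizerD(2)[OF A, of "Suc j"] by (simp add: comp_assoc)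
  then have "aut_mor M1 (?O j) (pprod M1 [pinv M1 (?A j), ?A (Suc j)]) (?O (Suc j))" for j
    using H.aut_morI O H.normalizer_prod H.normalizer_inv A by blast
  then show ?thesis
    using O n unfolding nerve_simplex_def twist_simplex_def by (auto simp: pg_ratios_def)
qed

lemma nerve_face_twist_simplex:
  assumes q: "\<And>j. [g, q j] \<in> pdom M2" and i: "i \<le> n"
  shows "nerve_face M1 i (twist_simplex g q (Suc n)) = twist_simplex g (q \<circ> coface i) n"
  using map_upt_coface[OF i, of "\<lambda>j. t (pprod M2 [g, q j]) \<circ> inv (t (q j))"]
    H.pg_face_ratios[OF eta_normalizer[OF q] i]
  by (simp add: nerve_face_def twist_simplex_def comp_def)

lemma nerve_degen_twist_simplex:
  assumes i: "i \<le> n"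
  shows "nerve_degen M1 i (twist_simplex g q (Suc n)) = twist_simplex g (q \<circ> codegeneracy i) (Suc (Suc n))"
  using map_upt_codegeneracy[OF i, of "\<lambda>j. t (pprod M2 [g, q j]) \<circ> inv (t (q j))"]
    H.pg_degen_ratios[OF i]
  by (simp add: nerve_degen_def twist_simplex_def comp_def del: upt_Suc)

lemma eta_ratio_prod:
  assumes x: "[g, h, x] \<in> pdom M2" and y: "[g, h, y] \<in> pdom M2"
  shows "pprod M1 [pinv M1 (eta (pprod M2 [g, h]) x), eta (pprod M2 [g, h]) y] =
    pprod M1 [(t (pprod M2 [g, pprod M2 [h, x]]) \<circ> inv (t (pprod M2 [h, x])))
                (pprod M1 [pinv M1 (eta h x), eta h y]),
              pprod M1 [pinv M1 (eta g (pprod M2 [h, x])), eta g (pprod M2 [h, y])]]"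
proof -
  define A B C D where "A = eta g h" and "B z = eta h z" and "C z = eta g (pprod M2 [h, z])"
    and "D z = eta (pprod M2 [g, h]) z" for z
  have N: "A \<in> normalizer M1" "B x \<in> normalizer M1" "B y \<in> normalizer M1"
    "C x \<in> normalizer M1" "C y \<in> normalizer M1"
    using eta_normalizer triple_dom[OF x] triple_dom[OF y] by (simp_all add: A_def B_def C_def)
  have TN: "t g (B x) \<in> normalizer M1" "t g (B y) \<in> normalizer M1"
    using H.aut_normalizer[OF t_aut] N by auto
  have D: "D z = pprod M1 [pinv M1 A, pprod M1 [t g (B z), C z]]" if "[g, h, z] \<in> pdom M2" for z
    using eta_cocycle[OF that] H.cancel_left_normalizer[OF N(1)] by (simp add: A_def B_def C_def D_def)
  have "t (pprod M2 [g, pprod M2 [h, x]]) \<circ> inv (t (pprod M2 [h, x])) = inv (pconj M1 (C x)) \<circ> t g"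
    using t_pconj[OF triple_dom(3)[OF x]] H.normalizerD(2)[OF N(4)] by (simp add: C_def comp_assoc)
  then have "(t (pprod M2 [g, pprod M2 [h, x]]) \<circ> inv (t (pprod M2 [h, x]))) (pprod M1 [pinv M1 (B x), B y]) =
      pconj M1 (pinv M1 (C x)) (pprod M1 [pinv M1 (t g (B x)), t g (B y)])"
    using H.pconj_inv[OF N(4)] H.aut_prod2[OF t_aut H.normalizer_pair_dom[OF H.normalizer_inv[OF N(2)]]]
      H.aut_inv_commute[OF t_aut] by simp
  also have "\<dots> = pprod M1 [pinv M1 (C x), pprod M1 [pprod M1 [pinv M1 (t g (B x)), t g (B y)], C x]]"
    using H.pconj_normalizer[OF H.normalizer_inv[OF N(4)]] by simp
  finally show ?thesis
    unfolding A_def[symmetric] B_def[symmetric] C_def[symmetric] D_def[symmetric] D[OF x] D[OF y]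
    using N TN
    by (simp add: H.prod_assoc_normalizer H.normalizer_prod H.normalizer_inv H.inv_prod_normalizer)
qed

lemma nerve_mult_twist_simplex:
  assumes r: "\<And>j. [g, h, r j] \<in> pdom M2"
  shows "nerve_mult M1 (twist_simplex g (\<lambda>j. pprod M2 [h, r j]) n) (twist_simplex h r n) =
    twist_simplex (pprod M2 [g, h]) r n"
proof -
  have assoc: "pprod M2 [g, pprod M2 [h, r j]] = pprod M2 [pprod M2 [g, h], r j]" for j
    using G.prod_assoc[of "[g]" "[h, r j]" "[]"] G.prod_assoc[of "[]" "[g, h]" "[r j]"] r[of j] by simp
  have "t (pprod M2 [g, pprod M2 [h, r j]]) \<circ> inv (t (pprod M2 [h, r j])) \<circ>
      (t (pprod M2 [h, r j]) \<circ> inv (t (r j))) = t (pprod M2 [pprod M2 [g, h], r j]) \<circ> inv (t (r j))" for j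
    using assoc t_aut by (simp add: comp_assoc)
  then show ?thesis
    using eta_ratio_prod[OF r r]
    by (auto simp: nerve_mult_def twist_simplex_def pg_ratios_def intro!: nth_equalityI)
qed

lemma nerve_simplex_pair_phi:
  assumes "b \<in> pdom M2" "b \<noteq> []" shows "nerve_simplex M1 (length b - 1) (pair_phi b)"
  using nerve_simplex_twist_simplex[of "hd b" "\<lambda>j. pprod M2 (take j (tl b))" "length b"]
    G.append_prod_take_dom[of "[hd b]" "tl b"] assms by (simp add: pair_phi_def)

lemma pair_phi_face:
  assumes b: "b \<in> pdom M2" and i: "2 \<le> i" "i \<le> length b"
  shows "pair_phi (pg_face M2 i b) = nerve_face M1 (i - 1) (pair_phi b)"
proof -
  obtain g c i' where gc: "b = g # c" and i': "i = Suc i'" "1 \<le> i'" "i' \<le> length c"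
    using i by (cases b; cases i) auto
  have c: "c \<in> pdom M2" using b gc G.dom_suffix[of "[g]" c] by simp
  have "pair_phi (pg_face M2 i b) = twist_simplex g (\<lambda>j. pprod M2 (take j (pg_face M2 i' c))) (length c)"
    using gc i' pg_face_Cons[of i' c M2 g] pg_face_length[of c i' M2] by (cases c) (auto simp: pair_phi_def)
  also have "\<dots> = twist_simplex g ((\<lambda>j. pprod M2 (take j c)) \<circ> coface i') (length c)"
    using G.prod_take_pg_face[OF c i'(2,3)] by (auto intro: twist_simplex_cong)
  also have "\<dots> = nerve_face M1 (i - 1) (pair_phi b)"
    using nerve_face_twist_simplex[OF _ i'(3)] G.append_prod_take_dom[of "[g]" c] b gc i'
    by (simp add: pair_phi_def)
  finally show ?thesis .
qed

lemma pair_phi_degen: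
  assumes b: "b \<in> pdom M2" and i: "1 \<le> i" "i \<le> length b"
  shows "pair_phi (pg_degen M2 i b) = nerve_degen M1 (i - 1) (pair_phi b)"
proof -
  obtain g c i' where gc: "b = g # c" and i': "i = Suc i'" "i' \<le> length c"
    using i by (cases b; cases i) auto
  have c: "c \<in> pdom M2" using b gc G.dom_suffix[of "[g]" c] by simp
  have "pair_phi (pg_degen M2 i b) =
      twist_simplex g (\<lambda>j. pprod M2 (take j (pg_degen M2 i' c))) (Suc (Suc (length c)))"
    using gc i' by (simp add: pair_phi_def pg_degen_Cons)
  also have "\<dots> = twist_simplex g ((\<lambda>j. pprod M2 (take j c)) \<circ> codegeneracy i') (Suc (Suc (length c)))"
    using G.prod_take_pg_degen[OF c i'(2)] by (auto intro: twist_simplex_cong)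
  also have "\<dots> = nerve_degen M1 (i - 1) (pair_phi b)"
    using nerve_degen_twist_simplex[OF i'(2)] gc i' by (simp add: pair_phi_def)
  finally show ?thesis .
qed

lemma pair_phi_degen_0: "pair_phi (pg_degen M2 0 b) = nerve_unit M1 (length b)"
  using t_aut by (simp add: pair_phi_def pg_degen_def twist_simplex_def pg_ratios_def nerve_unit_def
      eta_one_left map_replicate_const replicate_append_same flip: replicate_Suc)

lemma pair_phi_face_1:
  assumes b: "b \<in> pdom M2" and n: "2 \<le> length b"
  shows "pair_phi (pg_face M2 1 b) = nerve_mult M1 (nerve_face M1 0 (pair_phi b)) (pair_phi (pg_face M2 0 b))"
proof -
  obtain g h r where ghr: "b = g # h # r" using n by (cases b; cases "tl b") auto
  have dom: "[g, h, pprod M2 (take j r)] \<in> pdom M2" for j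
    using G.append_prod_take_dom[of "[g, h]" r] b ghr by simp
  have hr: "h # r \<in> pdom M2" using G.dom_suffix[of "[g]" "h # r"] b ghr by simp
  have "nerve_face M1 0 (pair_phi b) =
      twist_simplex g (\<lambda>j. pprod M2 (take (Suc j) (h # r))) (Suc (length r))"
    using nerve_face_twist_simplex[of g _ 0 "Suc (length r)"] G.append_prod_take_dom[of "[g]" "h # r"] b ghr
    by (simp add: pair_phi_def coface_def comp_def)
  also have "\<dots> = twist_simplex g (\<lambda>j. pprod M2 [h, pprod M2 (take j r)]) (Suc (length r))"
  proof -
    have "pprod M2 (take (Suc j) (h # r)) = pprod M2 [h, pprod M2 (take j r)]" for j
      using G.prod_Cons G.take_dom[OF hr, of "Suc j"] by simp
    then show ?thesis by simp
  qed
  finally show ?thesis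
    using nerve_mult_twist_simplex[OF dom] ghr by (simp add: pair_phi_def pg_face_def)
qed

lemma low_values_pair_phi: "low_values M2 M1 t eta (\<lambda>n b. pair_phi b)"
  using t_one eta_one_right
  by (simp add: low_values_def pair_phi_def twist_simplex_def pg_ratios_def numeral_2_eq_2
      pone_def[symmetric])

lemma twisting_function_pair_phi: "twisting_function M2 M1 (\<lambda>n b. pair_phi b)"
  unfolding twisting_function_def
proof (intro allI impI ballI conjI)
  fix n b assume n: "1 \<le> n" and b: "b \<in> pdom M2" and len: "length b = n"
  show "nerve_simplex M1 (n - 1) (pair_phi b)"
    using nerve_simplex_pair_phi[OF b] n len by fastforce
  show "pair_phi (pg_face M2 i b) = nerve_face M1 (i - 1) (pair_phi b)" if "2 \<le> i \<and> i \<le> n" for i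
    using pair_phi_face[OF b] that len by simp
  show "pair_phi (pg_face M2 1 b) = nerve_mult M1 (nerve_face M1 0 (pair_phi b)) (pair_phi (pg_face M2 0 b))"
    if "2 \<le> n" using pair_phi_face_1[OF b] that len by simp
  show "pair_phi (pg_degen M2 i b) = nerve_degen M1 (i - 1) (pair_phi b)" if "1 \<le> i \<and> i \<le> n" for i
    using pair_phi_degen[OF b] that len by simp
  show "pair_phi (pg_degen M2 0 b) = nerve_unit M1 n"
    using pair_phi_degen_0 len by simp
qed

end

theorem lemma6p2:
  fixes M2 :: "'a partial_group" and M1 :: "'b partial_group"
  assumes "partial_group M2" and "partial_group M1"
  shows "(\<forall>t eta. twisting_pair M2 M1 t eta \<longrightarrow>
            (\<exists>phi. twisting_function M2 M1 phi \<and> low_values M2 M1 t eta phi \<and>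
               (\<forall>psi. twisting_function M2 M1 psi \<and> low_values M2 M1 t eta psi \<longrightarrow>
                  (\<forall>n\<ge>1. \<forall>b\<in>pdom M2. length b = n \<longrightarrow> psi n b = phi n b)))) \<and>
         (\<forall>phi. twisting_function M2 M1 phi \<longrightarrow>
            (\<exists>t eta. twisting_pair M2 M1 t eta \<and> low_values M2 M1 t eta phi))"
proof -
  interpret two_pgroups M2 M1
    using assms by (simp add: two_pgroups_def pgroup_def)
  have "\<exists>phi. twisting_function M2 M1 phi \<and> low_values M2 M1 t eta phi \<and>
      (\<forall>psi. twisting_function M2 M1 psi \<and> low_values M2 M1 t eta psi \<longrightarrow>
         (\<forall>n\<ge>1. \<forall>b\<in>pdom M2. length b = n \<longrightarrow> psi n b = phi n b))"
    if "twisting_pair M2 M1 t eta" for t eta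
  proof -
    interpret twisting_pair_data M2 M1 t eta
      using assms that by (simp add: twisting_pair_data_def twisting_pair_data_axioms_def
          two_pgroups_def pgroup_def)
    have "psi n b = pair_phi b"
      if "twisting_function M2 M1 psi" "low_values M2 M1 t eta psi" "1 \<le> n" "b \<in> pdom M2" "length b = n"
      for psi n b
      using twisting_function_unique[OF twisting_function_pair_phi that(1)] that(2-)
        low_values_pair_phi unfolding low_values_def by auto
    then show ?thesis using twisting_function_pair_phi low_values_pair_phi by blast
  qed
  then show ?thesis using twisting_pair_twist low_values_twist by blast
qed

end
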